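(* Let $\Gamma$ be a finite monoid generating set of $V$, let $w = a_n \cdots a_1 \in \Gamma^+$ ($a_i \in \Gamma$), and let $x \in \{0,1\}^*$ be such that the computation $x = x_0 \mapsto x_1 \mapsto \cdots \mapsto x_n$ with $x_i = a_i(x_{i-1})$ ($1\le i\le n$) is defined (each $x_i$ is defined under the partial action on $\{0,1\}^*$). Then there exist $s, z_0, z_1, \ldots, z_n \in \{0,1\}^*$ such that: (1) $x_i = z_i s$ and $|z_i| \le |w|\cdot \mathrm{maxlen}(\Gamma)$ for $0 \le i \le n$; (2) $z_{i+1} = a_{i+1}(z_i)$ for $0 \le i \le n-1$ (in particular $z_n = w(z_0)$); (3) there exists $k \in \{0,1,\ldots,n\}$ with $|z_k| \le \mathrm{maxlen}(\Gamma)$. Moreover, $w(x) \ne x$ and $v(x)$ is defined for every suffix $v$ of $w$ if and only if $w(z_0) \neq z_0$ and $v(z_0)$ is defined for every suffix $v$ of $w$.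
   Context: Thompson group $V$: a prefix code is a set $P \subseteq \{0,1\}^*$ in which no element is a proper prefix of another; it is maximal if it is contained in no larger prefix code. Each bijection $\varphi: P\to Q$ between finite maximal prefix codes defines a homeomorphism of $\{0,1\}^\omega$ by $pt \mapsto \varphi(p)t$; $V$ is the group of all such homeomorphisms. Each $\varphi\in V$ has a unique such table with the fewest entries (the maximally extended one); its domain and image codes are denoted $\mathrm{domC}(\varphi)$ and $\mathrm{imC}(\varphi)$. The partial action of $\varphi$ on $\{0,1\}^*$ is $\varphi(pu) = \varphi(p)u$ for $p\in\mathrm{domC}(\varphi)$, $u\in\{0,1\}^*$, and $\varphi(x)$ is undefined if $x \notin \mathrm{domC}(\varphi)\{0,1\}^*$. $\mathrm{maxlen}(\varphi) = \max\{|z| : z \in \mathrm{domC}(\varphi)\cup\mathrm{imC}(\varphi)\}$ and $\mathrm{maxlen}(S) = \max_{\varphi\in S}\mathrm{maxlen}(\varphi)$ for finite $S\subseteq V$. A monoid generating set $\Gamma\subseteq V$ is regarded as a finite alphabet; for $w = a_n\cdots a_1 \in \Gamma^+$, $w(\cdot)$ denotes the element $a_n\circ\cdots\circ a_1$ of $V$ ($a_1$ applied first), and its partial action on $\{0,1\}^*$ is that of this element of $V$. *)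

theory Defs
  imports Main "HOL-Library.Sublist"
begin

type_synonym cantor = "nat \<Rightarrow> bool"

definition prepend :: "bool list \<Rightarrow> cantor \<Rightarrow> cantor" where
  "prepend p t = (\<lambda>i. if i < length p then p ! i else t (i - length p))"

definition prefix_code :: "bool list set \<Rightarrow> bool" where
  "prefix_code P \<longleftrightarrow> (\<forall>p\<in>P. \<forall>q\<in>P. prefix p q \<longrightarrow> p = q)"

definition maximal_prefix_code :: "bool list set \<Rightarrow> bool" where
  "maximal_prefix_code P \<longleftrightarrow> prefix_code P \<and>
     (\<forall>Q. prefix_code Q \<and> P \<subseteq> Q \<longrightarrow> Q = P)"

definition is_table :: "(cantor \<Rightarrow> cantor) \<Rightarrow> bool list set \<Rightarrow> (bool list \<Rightarrow> bool list) \<Rightarrow> bool" where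
  "is_table f P \<phi> \<longleftrightarrow> finite P \<and> maximal_prefix_code P \<and> inj_on \<phi> P \<and>
     maximal_prefix_code (\<phi> ` P) \<and> (\<forall>p\<in>P. \<forall>t. f (prepend p t) = prepend (\<phi> p) t)"

definition ThompsonV :: "(cantor \<Rightarrow> cantor) set" where
  "ThompsonV = {f. \<exists>P \<phi>. is_table f P \<phi>}"

definition table_size :: "(cantor \<Rightarrow> cantor) \<Rightarrow> nat" where
  "table_size f = (LEAST n. \<exists>P \<phi>. is_table f P \<phi> \<and> card P = n)"

text \<open>Domain code of the (unique) table with fewest entries.\<close>
definition domC :: "(cantor \<Rightarrow> cantor) \<Rightarrow> bool list set" where
  "domC f = (THE P. (\<exists>\<phi>. is_table f P \<phi>) \<and> card P = table_size f)"

definition tbl :: "(cantor \<Rightarrow> cantor) \<Rightarrow> bool list \<Rightarrow> bool list" where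
  "tbl f p = (THE q. \<forall>t. f (prepend p t) = prepend q t)"

definition imC :: "(cantor \<Rightarrow> cantor) \<Rightarrow> bool list set" where
  "imC f = tbl f ` domC f"

definition act :: "(cantor \<Rightarrow> cantor) \<Rightarrow> bool list \<Rightarrow> bool list option" where
  "act f x = (if \<exists>p\<in>domC f. prefix p x
     then (let p = (THE p. p \<in> domC f \<and> prefix p x) in Some (tbl f p @ drop (length p) x))
     else None)"

definition maxlen :: "(cantor \<Rightarrow> cantor) \<Rightarrow> nat" where
  "maxlen f = Max (length ` (domC f \<union> imC f))"

definition maxlen_set :: "(cantor \<Rightarrow> cantor) set \<Rightarrow> nat" where
  "maxlen_set S = Max (maxlen ` S)"

text \<open>A word [a_1, ..., a_n] (list order = order of application) denotes a_n o ... o a_1.\<close>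
fun eval_word :: "(cantor \<Rightarrow> cantor) list \<Rightarrow> (cantor \<Rightarrow> cantor)" where
  "eval_word [] = id"
| "eval_word (a # w) = eval_word w \<circ> a"

definition monoid_gen_set_V :: "(cantor \<Rightarrow> cantor) set \<Rightarrow> bool" where
  "monoid_gen_set_V \<Gamma> \<longleftrightarrow> \<Gamma> \<subseteq> ThompsonV \<and>
     (\<forall>f\<in>ThompsonV. \<exists>ws. set ws \<subseteq> \<Gamma> \<and> eval_word ws = f)"

end

theory Submission
  imports Defs
begin

text \<open>
  Each step \<open>x\<^sub>i \<mapsto> x\<^sub>i\<^sub>+\<^sub>1\<close> replaces a prefix \<open>p\<^sub>i\<close> of \<open>x\<^sub>i\<close> by a prefix \<open>q\<^sub>i\<close>, both of length at most
  \<open>maxlen \<Gamma>\<close>, and keeps the remainder \<open>u\<^sub>i\<close>. Consecutive words share \<open>u\<^sub>i\<close>, so all \<open>x\<^sub>i\<close> end in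
  the same word \<open>s\<close> of length \<open>min\<^sub>i |u\<^sub>i|\<close>; cutting it off leaves words \<open>z\<^sub>i\<close> on which the
  same computation runs. Where the minimum is attained, \<open>z\<^sub>j = p\<^sub>j\<close>, so \<open>|z\<^sub>j| \<le> maxlen \<Gamma>\<close>,
  and since lengths change by at most \<open>maxlen \<Gamma>\<close> per step, \<open>|z\<^sub>i| \<le> n \<cdot> maxlen \<Gamma>\<close>.

  For the equivalence, an element of \<open>V\<close> acts on a word \<open>x\<close> exactly when it maps
  \<open>x{0,1}\<^sup>\<omega>\<close> onto a cylinder \<open>y{0,1}\<^sup>\<omega>\<close> by \<open>xt \<mapsto> yt\<close>, because the domain code of the
  minimal table consists of the minimal such words. This property is stable under
  composition, so every prefix of \<open>w\<close> acts on both \<open>x\<^sub>0\<close> and \<open>z\<^sub>0\<close>, and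
  \<open>w(x\<^sub>0) = x\<^sub>0 \<longleftrightarrow> w(z\<^sub>0) = z\<^sub>0\<close> since \<open>x\<^sub>i = z\<^sub>i s\<close>.
\<close>

section \<open>Prepending words to sequences\<close>

definition initial_word :: "nat \<Rightarrow> cantor \<Rightarrow> bool list" where
  "initial_word n a = map a [0..<n]"

definition maps_cylinder :: "(cantor \<Rightarrow> cantor) \<Rightarrow> bool list \<Rightarrow> bool list \<Rightarrow> bool" where
  "maps_cylinder f x y \<longleftrightarrow> (\<forall>t. f (prepend x t) = prepend y t)"

lemma prepend_Nil [simp]: "prepend [] t = t"
  by (simp add: prepend_def)

lemma prepend_append: "prepend (p @ q) t = prepend p (prepend q t)"
  by (auto simp: prepend_def nth_append fun_eq_iff)

lemma length_initial_word [simp]: "length (initial_word n a) = n"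
  by (simp add: initial_word_def)

lemma initial_word_prepend: "n \<le> length p \<Longrightarrow> initial_word n (prepend p t) = take n p"
  by (auto simp: initial_word_def prepend_def intro!: nth_equalityI)

lemma prepend_initial_word: "prepend (initial_word n a) (\<lambda>i. a (i + n)) = a"
  by (auto simp: initial_word_def prepend_def fun_eq_iff)

lemma prepend_cancel: "prepend p t = prepend p t' \<Longrightarrow> t = t'"
proof
  fix i assume "prepend p t = prepend p t'"
  hence "prepend p t (i + length p) = prepend p t' (i + length p)" by simp
  thus "t i = t' i" by (simp add: prepend_def)
qed

lemma prepend_eq_imp_prefix:
  assumes "prepend p t = prepend q t'" "length p \<le> length q"
  shows "prefix p q"
proof -
  have "p = initial_word (length p) (prepend q t')"
    using assms(1) initial_word_prepend[of "length p" p t] by simp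
  also have "\<dots> = take (length p) q" using assms(2) by (rule initial_word_prepend)
  finally show ?thesis by (metis take_is_prefix)
qed

lemma prepend_eq_imp_comparable: "prepend p t = prepend q t' \<Longrightarrow> prefix p q \<or> prefix q p"
  by (metis nle_le prepend_eq_imp_prefix)

lemma prepend_eq_all_imp_eq:
  assumes eq: "\<forall>t. prepend q t = prepend q' t"
  shows "q = q'"
proof -
  have no_strict: "\<not> strict_prefix q q'" if "\<forall>t. prepend q t = prepend q' t" for q q'
  proof
    assume "strict_prefix q q'"
    then obtain r where r: "q' = q @ r" "r \<noteq> []" by (auto simp: strict_prefix_def prefix_def)
    define t :: cantor where "t = (\<lambda>_. \<not> r ! 0)"
    \<comment> \<open>\<open>t\<close> would have to start with its own negated first letter\<close>
    have "prepend q t = prepend q (prepend r t)" using that r by (simp add: prepend_append)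
    hence "t 0 = prepend r t 0" by (metis prepend_cancel)
    thus False using r(2) by (simp add: t_def prepend_def)
  qed
  show ?thesis
    using prepend_eq_imp_comparable eq no_strict[OF eq] no_strict[of q' q] eq
    by (metis strict_prefix_def)
qed

lemma maps_cylinder_unique: "maps_cylinder f x y \<Longrightarrow> maps_cylinder f x y' \<Longrightarrow> y = y'"
  unfolding maps_cylinder_def using prepend_eq_all_imp_eq by metis

lemma maps_cylinder_append: "maps_cylinder f x y \<Longrightarrow> maps_cylinder f (x @ u) (y @ u)"
  by (simp add: maps_cylinder_def prepend_append)

lemma maps_cylinder_comp: "maps_cylinder f x y \<Longrightarrow> maps_cylinder g y z \<Longrightarrow> maps_cylinder (g \<circ> f) x z"
  by (simp add: maps_cylinder_def)

section \<open>Maximal prefix codes\<close>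

lemma prefix_antisym_length: "prefix p q \<Longrightarrow> length q \<le> length p \<Longrightarrow> p = q"
  by (auto simp: prefix_def)

lemma maximal_prefix_code_comparable:
  assumes "maximal_prefix_code P"
  shows "\<exists>p\<in>P. prefix p u \<or> prefix u p"
proof (rule ccontr)
  assume h: "\<not> ?thesis"
  have "prefix_code P" using assms by (simp add: maximal_prefix_code_def)
  hence "prefix_code (insert u P)" using h by (auto simp: prefix_code_def)
  hence "insert u P = P" using assms by (auto simp: maximal_prefix_code_def)
  thus False using h by blast
qed

lemma maximal_prefix_code_cover:
  assumes "finite P" "maximal_prefix_code P"
  shows "\<exists>p\<in>P. \<exists>t. a = prepend p t"
proof -
  define N where "N = Suc (Max (length ` P))"
  obtain p where p: "p \<in> P" "prefix p (initial_word N a) \<or> prefix (initial_word N a) p"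
    using maximal_prefix_code_comparable[OF assms(2)] by blast
  have "length p < N" using p(1) assms(1) by (simp add: N_def le_imp_less_Suc)
  hence "prefix p (initial_word N a)" using p(2) prefix_length_le by fastforce
  then obtain r where "initial_word N a = p @ r" by (auto simp: prefix_def)
  hence "a = prepend p (prepend r (\<lambda>i. a (i + N)))"
    using prepend_initial_word[of N a] by (simp add: prepend_append)
  thus ?thesis using p(1) by blast
qed

lemma maximal_prefix_codeI:
  assumes "prefix_code P" "\<And>a. \<exists>p\<in>P. \<exists>t. a = prepend p t"
  shows "maximal_prefix_code P"
  unfolding maximal_prefix_code_def
proof (intro conjI assms(1) allI impI)
  fix Q assume Q: "prefix_code Q \<and> P \<subseteq> Q"
  have "q \<in> P" if q: "q \<in> Q" for q
  proof -
    obtain p t where p: "p \<in> P" "prepend q (\<lambda>_. False) = prepend p t" using assms(2) by blast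
    hence "q = p" using Q q prepend_eq_imp_comparable[OF p(2)] by (auto simp: prefix_code_def)
    thus "q \<in> P" using p(1) by simp
  qed
  thus "Q = P" using Q by blast
qed

lemma maximal_prefix_code_prefix:
  assumes "finite P" "maximal_prefix_code P" "Max (length ` P) \<le> length u"
  shows "\<exists>p\<in>P. prefix p u"
proof -
  obtain p t where p: "p \<in> P" "prepend u (\<lambda>_. False) = prepend p t"
    using maximal_prefix_code_cover[OF assms(1,2)] by blast
  have "length p \<le> length u" using p(1) assms by (meson Max_ge finite_imageI image_eqI le_trans)
  thus ?thesis using prepend_eq_imp_prefix[OF p(2)[symmetric]] p(1) by blast
qed

lemma maximal_prefix_code_words_of_length:
  "finite {u::bool list. length u = N}" "maximal_prefix_code {u::bool list. length u = N}"
proof -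
  show "finite {u::bool list. length u = N}"
    using finite_lists_length_eq[of "UNIV::bool set" N] by simp
  show "maximal_prefix_code {u::bool list. length u = N}"
  proof (rule maximal_prefix_codeI)
    show "prefix_code {u::bool list. length u = N}"
      unfolding prefix_code_def using prefix_antisym_length by fastforce
    show "\<exists>p\<in>{u. length u = N}. \<exists>t. a = prepend p t" for a
      using prepend_initial_word[of N a] by (metis length_initial_word mem_Collect_eq)
  qed
qed

section \<open>Tables and the group V\<close>

lemma is_table_bij:
  assumes "is_table f P \<phi>"
  shows "bij f"
proof (rule bijI)
  have fin: "finite P" "maximal_prefix_code P" "maximal_prefix_code (\<phi> ` P)" "inj_on \<phi> P"
    and tb: "\<And>p t. p \<in> P \<Longrightarrow> f (prepend p t) = prepend (\<phi> p) t"
    using assms by (auto simp: is_table_def)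
  show "inj f"
  proof
    fix a b assume ab: "f a = f b"
    obtain p t where p: "p \<in> P" "a = prepend p t" using maximal_prefix_code_cover[OF fin(1,2)] by blast
    obtain p' t' where p': "p' \<in> P" "b = prepend p' t'" using maximal_prefix_code_cover[OF fin(1,2)] by blast
    have eq: "prepend (\<phi> p) t = prepend (\<phi> p') t'" using ab p p' tb by simp
    hence "\<phi> p = \<phi> p'" using fin(3) p(1) p'(1) prepend_eq_imp_comparable
      unfolding maximal_prefix_code_def prefix_code_def by (metis image_eqI)
    thus "a = b" using eq p p' fin(4) by (metis inj_onD prepend_cancel)
  qed
  show "surj f"
  proof (rule surjI)
    fix b
    obtain q t where "q \<in> \<phi> ` P" "b = prepend q t"
      using maximal_prefix_code_cover[OF _ fin(3)] fin(1) by blast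
    thus "f (SOME a. f a = b) = b" using tb by (metis (mono_tags, lifting) imageE someI)
  qed
qed

lemma is_tableI:
  assumes "bij f" "finite P" "maximal_prefix_code P"
    and tb: "\<And>p t. p \<in> P \<Longrightarrow> f (prepend p t) = prepend (\<phi> p) t"
  shows "is_table f P \<phi>"
proof -
  have pc: "prefix_code P" using assms(3) by (simp add: maximal_prefix_code_def)
  have injf: "inj f" using assms(1) bij_is_inj by blast
  have eq_if_prefix: "p = p'" if pp: "p \<in> P" "p' \<in> P" "prefix (\<phi> p) (\<phi> p')" for p p'
  proof -
    obtain r where r: "\<phi> p' = \<phi> p @ r" using pp(3) by (auto simp: prefix_def)
    have "f (prepend p' (\<lambda>_. False)) = f (prepend p (prepend r (\<lambda>_. False)))"
      using tb[OF pp(1)] tb[OF pp(2)] r by (simp add: prepend_append)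
    hence "prepend p' (\<lambda>_. False) = prepend p (prepend r (\<lambda>_. False))" using injf by (meson injD)
    thus "p = p'" using prepend_eq_imp_comparable pc pp(1,2) by (metis prefix_code_def)
  qed
  have "inj_on \<phi> P" by (rule inj_onI) (simp add: eq_if_prefix)
  moreover have "prefix_code (\<phi> ` P)"
    unfolding prefix_code_def using eq_if_prefix by blast
  moreover have "\<exists>q\<in>\<phi> ` P. \<exists>t. b = prepend q t" for b
  proof -
    obtain a where a: "b = f a" using assms(1) by (metis bij_pointE)
    obtain p t where "p \<in> P" "a = prepend p t" using maximal_prefix_code_cover[OF assms(2,3)] by blast
    thus ?thesis using a tb by blast
  qed
  ultimately show ?thesis
    unfolding is_table_def using assms(2,3) tb maximal_prefix_codeI by blast
qed

lemma is_table_cong: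
  assumes "is_table f P \<phi>" "\<And>p. p \<in> P \<Longrightarrow> \<phi> p = \<psi> p"
  shows "is_table f P \<psi>"
  using assms inj_on_cong[of P \<phi> \<psi>] image_cong[of P P \<phi> \<psi>] unfolding is_table_def by simp

lemma is_table_maps_cylinder:
  assumes "is_table f P \<phi>" "p \<in> P" "prefix p u"
  shows "maps_cylinder f u (\<phi> p @ drop (length p) u)"
proof -
  have "maps_cylinder f p (\<phi> p)" using assms(1,2) by (simp add: is_table_def maps_cylinder_def)
  hence "maps_cylinder f (p @ drop (length p) u) (\<phi> p @ drop (length p) u)"
    by (rule maps_cylinder_append)
  thus ?thesis using assms(3) by (metis append_take_drop_id prefix_def append_eq_conv_conj)
qed

lemma ThompsonV_bij: "f \<in> ThompsonV \<Longrightarrow> bij f"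
  unfolding ThompsonV_def using is_table_bij by blast

lemma ThompsonV_id: "id \<in> ThompsonV"
proof -
  have "maximal_prefix_code {[]}" by (rule maximal_prefix_codeI) (auto simp: prefix_code_def)
  hence "is_table id {[]} id" by (intro is_tableI) auto
  thus ?thesis by (auto simp: ThompsonV_def)
qed

lemma ThompsonV_comp:
  assumes "f \<in> ThompsonV" "g \<in> ThompsonV"
  shows "g \<circ> f \<in> ThompsonV"
proof -
  obtain P \<phi> where tf: "is_table f P \<phi>" using assms(1) by (auto simp: ThompsonV_def)
  obtain Q \<psi> where tg: "is_table g Q \<psi>" using assms(2) by (auto simp: ThompsonV_def)
  define D where "D = {u::bool list. length u = Max (length ` P) + Max (length ` Q)}"
  \<comment> \<open>words this long get through both tables without reaching their ends\<close>
  have "\<exists>z. maps_cylinder (g \<circ> f) u z" if u: "u \<in> D" for u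
  proof -
    obtain p where p: "p \<in> P" "prefix p u"
      using maximal_prefix_code_prefix[of P u] tf u by (auto simp: is_table_def D_def)
    have "length p \<le> Max (length ` P)" using p(1) tf by (auto simp: is_table_def)
    moreover define v where "v = \<phi> p @ drop (length p) u"
    ultimately have "Max (length ` Q) \<le> length v" using u by (simp add: D_def)
    then obtain q where q: "q \<in> Q" "prefix q v"
      using maximal_prefix_code_prefix[of Q v] tg by (auto simp: is_table_def)
    show ?thesis
      using is_table_maps_cylinder[OF tf p] is_table_maps_cylinder[OF tg q] maps_cylinder_comp
      unfolding v_def by blast
  qed
  then obtain \<chi> where "\<And>u. u \<in> D \<Longrightarrow> maps_cylinder (g \<circ> f) u (\<chi> u)" by metis
  hence "is_table (g \<circ> f) D \<chi>"
    using ThompsonV_bij[OF assms(1)] ThompsonV_bij[OF assms(2)] bij_comp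
      maximal_prefix_code_words_of_length
    by (intro is_tableI) (auto simp: D_def maps_cylinder_def)
  thus ?thesis by (auto simp: ThompsonV_def)
qed

lemma eval_word_ThompsonV: "set ws \<subseteq> ThompsonV \<Longrightarrow> eval_word ws \<in> ThompsonV"
  by (induction ws) (auto simp: ThompsonV_id ThompsonV_comp)

section \<open>The table with fewest entries\<close>

lemma maximal_prefix_code_sibling:
  assumes "finite P" "maximal_prefix_code P" "p \<in> P" "strict_prefix x p"
  shows "\<exists>q\<in>P. q \<noteq> p \<and> prefix x q"
proof -
  have pc: "prefix_code P" using assms(2) by (simp add: maximal_prefix_code_def)
  define b where "b = p ! length x"
  define x' where "x' = x @ [\<not> b]"
  have not_pref: "\<not> prefix x' p"
  proof
    assume "prefix x' p"
    then obtain zs where "p = x @ [\<not> b] @ zs" by (auto simp: x'_def prefix_def)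
    hence "p ! length x = (\<not> b)" by simp
    thus False using b_def by blast
  qed
  obtain q t where q: "q \<in> P" "prepend x' (\<lambda>_. False) = prepend q t"
    using maximal_prefix_code_cover[OF assms(1,2)] by blast
  have "prefix x' q \<or> prefix q x'" by (rule prepend_eq_imp_comparable[OF q(2)])
  then consider "prefix x' q" | "prefix q x" by (auto simp: x'_def)
  thus ?thesis
  proof cases
    case 1
    hence "prefix x q" unfolding x'_def by (rule append_prefixD)
    moreover have "q \<noteq> p" using 1 not_pref by auto
    ultimately show ?thesis using q(1) by blast
  next
    case 2
    have "prefix q p" using prefix_order.le_less_trans[OF 2 assms(4)] by (rule prefix_order.less_imp_le)
    hence "q = p" using pc q(1) assms(3) by (simp add: prefix_code_def)
    thus ?thesis using 2 assms(4) prefix_order.le_less_trans by blast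
  qed
qed

lemma maximal_prefix_code_collapse:
  assumes "finite P" "maximal_prefix_code P" "p \<in> P" "strict_prefix x p"
  shows "maximal_prefix_code (insert x {q\<in>P. \<not> prefix x q})"
proof (rule maximal_prefix_codeI)
  have pc: "prefix_code P" using assms(2) by (simp add: maximal_prefix_code_def)
  have "\<not> prefix q x" if "q \<in> P" "\<not> prefix x q" for q
  proof
    assume qx: "prefix q x"
    have "prefix q p" using prefix_order.le_less_trans[OF qx assms(4)] by (rule prefix_order.less_imp_le)
    hence "q = p" using pc that(1) assms(3) by (simp add: prefix_code_def)
    thus False using that(2) assms(4) by (simp add: strict_prefix_def)
  qed
  thus "prefix_code (insert x {q\<in>P. \<not> prefix x q})"
    using pc by (auto simp: prefix_code_def)
  fix a
  obtain q t where q: "q \<in> P" "a = prepend q t"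
    using maximal_prefix_code_cover[OF assms(1,2)] by blast
  show "\<exists>q\<in>insert x {q\<in>P. \<not> prefix x q}. \<exists>t. a = prepend q t"
  proof (cases "prefix x q")
    case True
    then obtain r where "q = x @ r" by (auto simp: prefix_def)
    thus ?thesis using q by (auto simp: prepend_append)
  qed (use q in auto)
qed

lemma table_size_le: "is_table f P \<phi> \<Longrightarrow> table_size f \<le> card P"
  unfolding table_size_def by (blast intro: Least_le)

lemma ex_table_of_table_size:
  assumes "f \<in> ThompsonV"
  obtains P \<phi> where "is_table f P \<phi>" "card P = table_size f"
proof -
  have "\<exists>n P \<phi>. is_table f P \<phi> \<and> card P = n" using assms by (auto simp: ThompsonV_def)
  from LeastI_ex[OF this] show ?thesis using that unfolding table_size_def by blast
qed

definition minimal_cylinders :: "(cantor \<Rightarrow> cantor) \<Rightarrow> bool list set" where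
  "minimal_cylinders f = {x. (\<exists>y. maps_cylinder f x y) \<and>
     (\<forall>x'. strict_prefix x' x \<longrightarrow> \<not> (\<exists>y. maps_cylinder f x' y))}"

lemma minimal_table_subset_minimal_cylinders:
  assumes tf: "is_table f P \<phi>"
    and least: "card P = table_size f"
    and p: "p \<in> P"
  shows "p \<in> minimal_cylinders f"
proof -
  have fin: "finite P" and mp: "maximal_prefix_code P"
    and tb: "\<And>p t. p \<in> P \<Longrightarrow> f (prepend p t) = prepend (\<phi> p) t"
    using tf by (auto simp: is_table_def)
  have "\<not> maps_cylinder f x y" if sx: "strict_prefix x p" for x y
  proof
    assume y: "maps_cylinder f x y"
    define E where "E = {q\<in>P. prefix x q}"
    define P' where "P' = insert x {q\<in>P. \<not> prefix x q}"
    \<comment> \<open>replacing the entries below \<open>x\<close> (at least two of them) by \<open>x \<mapsto> y\<close> shrinks the table\<close>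
    have "is_table f P' (\<phi>(x := y))"
      using is_table_bij[OF tf] fin maximal_prefix_code_collapse[OF fin mp p sx] tb y
      by (intro is_tableI) (auto simp: P'_def maps_cylinder_def)
    hence "card P \<le> card P'" unfolding least by (rule table_size_le)
    moreover obtain q where q: "q \<in> P" "q \<noteq> p" "prefix x q"
      using maximal_prefix_code_sibling[OF fin mp p sx] by blast
    have "card {p, q} \<le> card E"
      using q p sx fin by (intro card_mono) (auto simp: E_def strict_prefix_def)
    hence "2 \<le> card E" using q(2) by simp
    moreover have "P' = insert x (P - E)" by (auto simp: P'_def E_def)
    hence "card P' \<le> Suc (card (P - E))" using fin by (simp add: card_insert_if)
    moreover have "card (P - E) = card P - card E" using fin by (simp add: E_def card_Diff_subset)
    moreover have "card E \<le> card P" using fin by (simp add: E_def card_mono)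
    ultimately show False by linarith
  qed
  moreover have "maps_cylinder f p (\<phi> p)" using tb p by (simp add: maps_cylinder_def)
  ultimately show ?thesis by (auto simp: minimal_cylinders_def)
qed

lemma minimal_table_eq_minimal_cylinders:
  assumes tf: "is_table f P \<phi>"
    and least: "card P = table_size f"
  shows "P = minimal_cylinders f"
proof
  show "P \<subseteq> minimal_cylinders f"
    using minimal_table_subset_minimal_cylinders[OF tf least] by blast
  show "minimal_cylinders f \<subseteq> P"
  proof
    fix m assume m: "m \<in> minimal_cylinders f"
    obtain p t where p: "p \<in> P" "prepend m (\<lambda>_. False) = prepend p t"
      using maximal_prefix_code_cover tf by (meson is_table_def)
    have "p \<in> minimal_cylinders f" by (rule minimal_table_subset_minimal_cylinders[OF tf least p(1)])
    hence "m = p" using m prepend_eq_imp_comparable[OF p(2)]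
      by (auto simp: minimal_cylinders_def strict_prefix_def)
    thus "m \<in> P" using p(1) by simp
  qed
qed

lemma domC_eq_minimal_cylinders:
  assumes "f \<in> ThompsonV"
  shows "domC f = minimal_cylinders f"
  unfolding domC_def
proof (rule the_equality)
  obtain P \<phi> where P: "is_table f P \<phi>" "card P = table_size f"
    using ex_table_of_table_size[OF assms] .
  show "(\<exists>\<phi>. is_table f (minimal_cylinders f) \<phi>) \<and> card (minimal_cylinders f) = table_size f"
    using P minimal_table_eq_minimal_cylinders[OF P] by auto
  show "P' = minimal_cylinders f" if "(\<exists>\<phi>. is_table f P' \<phi>) \<and> card P' = table_size f" for P'
    using that minimal_table_eq_minimal_cylinders by blast
qed

lemma tbl_eq_of_is_table:
  assumes "is_table f P \<phi>" "p \<in> P"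
  shows "tbl f p = \<phi> p"
  unfolding tbl_def
proof (rule the_equality)
  show "\<forall>t. f (prepend p t) = prepend (\<phi> p) t" using assms by (simp add: is_table_def)
  fix q assume "\<forall>t. f (prepend p t) = prepend q t"
  thus "q = \<phi> p" using assms prepend_eq_all_imp_eq by (metis is_table_def)
qed

lemma is_table_domC_tbl:
  assumes "f \<in> ThompsonV"
  shows "is_table f (domC f) (tbl f)"
proof -
  obtain P \<phi> where P: "is_table f P \<phi>" "card P = table_size f"
    using ex_table_of_table_size[OF assms] .
  hence "P = domC f" using minimal_table_eq_minimal_cylinders domC_eq_minimal_cylinders[OF assms] by simp
  thus ?thesis using P(1) is_table_cong tbl_eq_of_is_table by metis
qed

section \<open>The partial action on words\<close>

lemma maps_cylinder_domC_prefix: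
  assumes "f \<in> ThompsonV" "maps_cylinder f x y"
  shows "\<exists>p\<in>domC f. prefix p x"
proof -
  define n where "n = (LEAST n. \<exists>y. maps_cylinder f (take n x) y)"
  have ex: "\<exists>y. maps_cylinder f (take (length x) x) y" using assms(2) by auto
  have n_le: "n \<le> length x" unfolding n_def using ex by (rule Least_le)
  have "take n x \<in> minimal_cylinders f"
    unfolding minimal_cylinders_def
  proof (intro CollectI conjI allI impI)
    show "\<exists>y. maps_cylinder f (take n x) y" unfolding n_def using ex by (rule LeastI)
    fix x' assume sx: "strict_prefix x' (take n x)"
    hence "length x' < n" using prefix_length_less n_le by fastforce
    moreover have "prefix x' x"
      using prefix_order.trans[OF prefix_order.less_imp_le[OF sx] take_is_prefix] .
    hence "x' = take (length x') x" by (auto simp: prefix_def)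
    ultimately show "\<not> (\<exists>y. maps_cylinder f x' y)"
      unfolding n_def using not_less_Least by metis
  qed
  thus ?thesis using domC_eq_minimal_cylinders[OF assms(1)] by (metis take_is_prefix)
qed

lemma act_eq_Some:
  assumes "f \<in> ThompsonV" "p \<in> domC f" "prefix p x"
  shows "act f x = Some (tbl f p @ drop (length p) x)"
proof -
  have "prefix_code (domC f)"
    using is_table_domC_tbl[OF assms(1)] by (simp add: is_table_def maximal_prefix_code_def)
  hence "(THE p. p \<in> domC f \<and> prefix p x) = p"
    using assms(2,3) prefix_same_cases unfolding prefix_code_def by (blast intro: the_equality)
  thus ?thesis using assms(2,3) unfolding act_def by auto
qed

lemma act_eq_SomeE:
  assumes "f \<in> ThompsonV" "act f x = Some y"
  obtains p where "p \<in> domC f" "prefix p x" "y = tbl f p @ drop (length p) x"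
proof -
  obtain p where p: "p \<in> domC f" "prefix p x" using assms(2) by (auto simp: act_def split: if_splits)
  thus ?thesis using that act_eq_Some[OF assms(1) p] assms(2) by simp
qed

lemma act_eq_Some_iff:
  assumes "f \<in> ThompsonV"
  shows "act f x = Some y \<longleftrightarrow> maps_cylinder f x y"
proof
  assume "act f x = Some y"
  then obtain p where p: "p \<in> domC f" "prefix p x" "y = tbl f p @ drop (length p) x"
    using act_eq_SomeE assms by blast
  thus "maps_cylinder f x y" using is_table_maps_cylinder[OF is_table_domC_tbl[OF assms]] by simp
next
  assume xy: "maps_cylinder f x y"
  then obtain p where p: "p \<in> domC f" "prefix p x" using maps_cylinder_domC_prefix assms by blast
  hence "maps_cylinder f x (tbl f p @ drop (length p) x)"
    using is_table_maps_cylinder[OF is_table_domC_tbl[OF assms]] by simp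
  thus "act f x = Some y" using act_eq_Some[OF assms p] maps_cylinder_unique xy by metis
qed

lemma eval_word_append_single: "eval_word (ws @ [a]) = a \<circ> eval_word ws"
  by (induction ws) auto

lemma act_eval_word_take:
  assumes "set w \<subseteq> ThompsonV"
    and run: "\<forall>i<length w. act (w ! i) (xs i) = Some (xs (Suc i))"
    and "k \<le> length w"
  shows "act (eval_word (take k w)) (xs 0) = Some (xs k)"
proof -
  have "maps_cylinder (eval_word (take k w)) (xs 0) (xs k)"
    using assms(3)
  proof (induction k)
    case 0
    show ?case by (simp add: maps_cylinder_def)
  next
    case (Suc k)
    hence k: "k < length w" by simp
    have "maps_cylinder (w ! k) (xs k) (xs (Suc k))"
      using run k assms(1) act_eq_Some_iff nth_mem by blast
    thus ?case
      using Suc k maps_cylinder_comp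
      by (simp add: take_Suc_conv_app_nth eval_word_append_single del: o_apply)
  qed
  thus ?thesis using act_eq_Some_iff eval_word_ThompsonV assms(1) set_take_subset
    by (metis order.trans)
qed

lemma maxlen_le_maxlen_set: "finite \<Gamma> \<Longrightarrow> a \<in> \<Gamma> \<Longrightarrow> maxlen a \<le> maxlen_set \<Gamma>"
  by (simp add: maxlen_set_def)

lemma length_domC_le_maxlen:
  assumes "a \<in> ThompsonV" "p \<in> domC a"
  shows "length p \<le> maxlen a" "length (tbl a p) \<le> maxlen a"
proof -
  have "finite (domC a \<union> imC a)"
    using is_table_domC_tbl[OF assms(1)] by (simp add: is_table_def imC_def)
  thus "length p \<le> maxlen a" "length (tbl a p) \<le> maxlen a"
    unfolding maxlen_def using assms(2) by (simp_all add: imC_def)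
qed

lemma act_eq_Some_split:
  assumes "f \<in> ThompsonV" "act f x = Some y"
  obtains p q u where "x = p @ u" "y = q @ u" "length p \<le> maxlen f" "length q \<le> maxlen f"
    and "\<And>v. act f (p @ v) = Some (q @ v)"
proof -
  obtain p where p: "p \<in> domC f" "prefix p x" "y = tbl f p @ drop (length p) x"
    using act_eq_SomeE[OF assms] .
  show ?thesis
  proof (rule that)
    show "x = p @ drop (length p) x" using p(2) by (auto simp: prefix_def)
    show "act f (p @ v) = Some (tbl f p @ v)" for v using act_eq_Some[OF assms(1) p(1)] by simp
  qed (use p length_domC_le_maxlen[OF assms(1) p(1)] in auto)
qed

lemma run_prefix_rewrites:
  assumes "finite \<Gamma>" "\<Gamma> \<subseteq> ThompsonV" "set w \<subseteq> \<Gamma>"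
    and "\<forall>i<length w. act (w ! i) (xs i) = Some (xs (Suc i))"
  obtains p q u where "\<And>i. i < length w \<Longrightarrow> xs i = p i @ u i \<and> xs (Suc i) = q i @ u i
      \<and> length (p i) \<le> maxlen_set \<Gamma> \<and> length (q i) \<le> maxlen_set \<Gamma>"
    and "\<And>i v. i < length w \<Longrightarrow> act (w ! i) (p i @ v) = Some (q i @ v)"
proof -
  have "\<exists>p q u. xs i = p @ u \<and> xs (Suc i) = q @ u \<and> length p \<le> maxlen_set \<Gamma>
      \<and> length q \<le> maxlen_set \<Gamma> \<and> (\<forall>v. act (w ! i) (p @ v) = Some (q @ v))"
    if "i < length w" for i
  proof -
    have "w ! i \<in> \<Gamma>" using that assms(3) nth_mem by blast
    hence "w ! i \<in> ThompsonV" "maxlen (w ! i) \<le> maxlen_set \<Gamma>"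
      using assms(1,2) maxlen_le_maxlen_set by auto
    thus ?thesis using act_eq_Some_split assms(4) that by (metis le_trans)
  qed
  then obtain p q u where "\<And>i. i < length w \<Longrightarrow> xs i = p i @ u i \<and> xs (Suc i) = q i @ u i
      \<and> length (p i) \<le> maxlen_set \<Gamma> \<and> length (q i) \<le> maxlen_set \<Gamma>
      \<and> (\<forall>v. act (w ! i) (p i @ v) = Some (q i @ v))"
    by metis
  thus ?thesis using that by blast
qed

section \<open>Cutting off a common suffix\<close>

lemma drop_diff_length_append:
  "L \<le> length u \<Longrightarrow> drop (length (a @ u) - L) (a @ u) = drop (length u - L) u"
  by (simp add: drop_append)

lemma take_diff_length_append:
  "L \<le> length u \<Longrightarrow> take (length (a @ u) - L) (a @ u) = a @ take (length u - L) u"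
  by (simp add: take_append)

lemma common_suffix_split:
  assumes "0 < n"
    and step: "\<And>i. i < n \<Longrightarrow> xs i = p i @ u i \<and> xs (Suc i) = q i @ u i"
  obtains zs s j where "\<And>i. i \<le> n \<Longrightarrow> xs i = zs i @ s"
    and "\<And>i. i < n \<Longrightarrow> \<exists>v. zs i = p i @ v \<and> zs (Suc i) = q i @ v"
    and "j < n" "zs j = p j" "zs (Suc j) = q j"
proof -
  define L where "L = Min ((\<lambda>i. length (u i)) ` {..<n})"
  have L_le: "L \<le> length (u i)" if "i < n" for i using that by (simp add: L_def)
  have "L \<in> (\<lambda>i. length (u i)) ` {..<n}" unfolding L_def using assms(1) by (intro Min_in) auto
  then obtain j where j: "j < n" "length (u j) = L" by auto
  define s where "s = drop (length (xs 0) - L) (xs 0)"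
  define zs where "zs i = take (length (xs i) - L) (xs i)" for i
  have suffix: "L \<le> length (xs i) \<and> drop (length (xs i) - L) (xs i) = s" if "i \<le> n" for i
    using that
  proof (induction i)
    case 0
    show ?case using step[OF assms(1)] L_le[OF assms(1)] by (simp add: s_def)
  next
    case (Suc i)
    hence "i < n" by simp
    thus ?case
      using Suc step[of i] L_le[of i] drop_diff_length_append[of L "u i"] by auto
  qed
  have "xs i = zs i @ s" if "i \<le> n" for i
    using suffix[OF that] by (metis zs_def append_take_drop_id)
  moreover have "zs i = p i @ take (length (u i) - L) (u i)"
    and "zs (Suc i) = q i @ take (length (u i) - L) (u i)" if "i < n" for i
    using step[OF that] take_diff_length_append[OF L_le[OF that]] by (simp_all add: zs_def)
  ultimately show ?thesis using that j by auto
qed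

lemma le_add_diff_mult_up:
  fixes a :: "nat \<Rightarrow> nat"
  assumes "j \<le> k" and "\<And>i. j \<le> i \<Longrightarrow> i < k \<Longrightarrow> a (Suc i) \<le> a i + d"
  shows "a k \<le> a j + (k - j) * d"
  using assms(1)
proof (induction rule: dec_induct)
  case (step i)
  thus ?case using assms(2)[of i] by (simp add: Suc_diff_le)
qed simp

lemma le_add_diff_mult_down:
  fixes a :: "nat \<Rightarrow> nat"
  assumes "j \<le> k" and "\<And>i. j \<le> i \<Longrightarrow> i < k \<Longrightarrow> a i \<le> a (Suc i) + d"
  shows "a j \<le> a k + (k - j) * d"
  using assms(1)
proof (induction rule: inc_induct)
  case (step i)
  have "a i \<le> a k + (k - Suc i) * d + d" using step.IH assms(2)[OF step.hyps] by linarith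
  moreover have "k - i = Suc (k - Suc i)" using step.hyps(2) by linarith
  ultimately show ?case by simp
qed simp

lemma bounded_walk_le:
  fixes a :: "nat \<Rightarrow> nat"
  assumes steps: "\<And>i. i < n \<Longrightarrow> a (Suc i) \<le> a i + d \<and> a i \<le> a (Suc i) + d"
    and "j < n" "a j \<le> d" "a (Suc j) \<le> d" "i \<le> n"
  shows "a i \<le> n * d"
proof (cases "i \<le> j")
  case True
  have "a i \<le> a j + (j - i) * d" using le_add_diff_mult_down[OF True] steps assms(2) by simp
  also have "\<dots> \<le> Suc (j - i) * d" using assms(3) by simp
  also have "\<dots> \<le> n * d" using assms(2) by (intro mult_le_mono1) simp
  finally show ?thesis .
next
  case False
  hence "Suc j \<le> i" by simp
  hence "a i \<le> a (Suc j) + (i - Suc j) * d" using le_add_diff_mult_up steps assms(5) by simp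
  also have "\<dots> \<le> Suc (i - Suc j) * d" using assms(4) by simp
  also have "\<dots> \<le> n * d" using False assms(5) by (intro mult_le_mono1) simp
  finally show ?thesis .
qed

lemma common_suffix_split_bounded:
  assumes "0 < n"
    and step: "\<And>i. i < n \<Longrightarrow> xs i = p i @ u i \<and> xs (Suc i) = q i @ u i
      \<and> length (p i) \<le> d \<and> length (q i) \<le> d"
  obtains zs s where "\<And>i. i \<le> n \<Longrightarrow> xs i = zs i @ s \<and> length (zs i) \<le> n * d"
    and "\<And>i. i < n \<Longrightarrow> \<exists>v. zs i = p i @ v \<and> zs (Suc i) = q i @ v"
    and "\<exists>j\<le>n. length (zs j) \<le> d"
proof -
  obtain zs s j where xs_zs: "\<And>i. i \<le> n \<Longrightarrow> xs i = zs i @ s"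
    and zs_step: "\<And>i. i < n \<Longrightarrow> \<exists>v. zs i = p i @ v \<and> zs (Suc i) = q i @ v"
    and j: "j < n" "zs j = p j" "zs (Suc j) = q j"
  proof (rule common_suffix_split[OF assms(1)])
    show "xs i = p i @ u i \<and> xs (Suc i) = q i @ u i" if "i < n" for i using step[OF that] by simp
  qed auto
  have "length (zs (Suc i)) \<le> length (zs i) + d \<and> length (zs i) \<le> length (zs (Suc i)) + d"
    if "i < n" for i
    using zs_step[OF that] step[OF that] by auto
  hence "length (zs i) \<le> n * d" if "i \<le> n" for i
    using bounded_walk_le[of n "\<lambda>i. length (zs i)" d, OF _ j(1) _ _ that] j step by simp
  moreover have "length (zs j) \<le> d" using j step by simp
  ultimately show ?thesis using that xs_zs zs_step j(1) by (meson less_imp_le)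
qed

theorem lemma3p1:
  fixes \<Gamma> :: "(cantor \<Rightarrow> cantor) set"
    and w :: "(cantor \<Rightarrow> cantor) list"
    and xs :: "nat \<Rightarrow> bool list"
    and n :: nat
  assumes "finite \<Gamma>" and "monoid_gen_set_V \<Gamma>"
    and "set w \<subseteq> \<Gamma>" and "w \<noteq> []" and "n = length w"
    and "\<forall>i<n. act (w ! i) (xs i) = Some (xs (Suc i))"
  shows "\<exists>s zs. (\<forall>i\<le>n. xs i = zs i @ s \<and> length (zs i) \<le> n * maxlen_set \<Gamma>)
      \<and> (\<forall>i<n. act (w ! i) (zs i) = Some (zs (Suc i)))
      \<and> act (eval_word w) (zs 0) = Some (zs n)
      \<and> (\<exists>k\<le>n. length (zs k) \<le> maxlen_set \<Gamma>)
      \<and> ((act (eval_word w) (xs 0) \<noteq> Some (xs 0) \<and>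
            (\<forall>k\<in>{1..n}. act (eval_word (take k w)) (xs 0) \<noteq> None))
         \<longleftrightarrow> (act (eval_word w) (zs 0) \<noteq> Some (zs 0) \<and>
            (\<forall>k\<in>{1..n}. act (eval_word (take k w)) (zs 0) \<noteq> None)))"
proof -
  have V: "\<Gamma> \<subseteq> ThompsonV" using assms(2) by (simp add: monoid_gen_set_V_def)
  obtain p q u where pqu: "\<And>i. i < n \<Longrightarrow> xs i = p i @ u i \<and> xs (Suc i) = q i @ u i
      \<and> length (p i) \<le> maxlen_set \<Gamma> \<and> length (q i) \<le> maxlen_set \<Gamma>"
    and pq_act: "\<And>i v. i < n \<Longrightarrow> act (w ! i) (p i @ v) = Some (q i @ v)"
    using run_prefix_rewrites[OF assms(1) V assms(3)] assms(5,6) by metis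
  have "0 < n" using assms(4,5) by simp
  then obtain zs s where xs_zs: "\<And>i. i \<le> n \<Longrightarrow> xs i = zs i @ s \<and> length (zs i) \<le> n * maxlen_set \<Gamma>"
    and zs_step: "\<And>i. i < n \<Longrightarrow> \<exists>v. zs i = p i @ v \<and> zs (Suc i) = q i @ v"
    and short: "\<exists>j\<le>n. length (zs j) \<le> maxlen_set \<Gamma>"
    using pqu by (rule common_suffix_split_bounded) auto
  have run: "act (w ! i) (zs i) = Some (zs (Suc i))" if "i < n" for i
    using zs_step[OF that] pq_act[OF that] by auto
  have act_prefix: "act (eval_word (take k w)) (xs 0) = Some (xs k)"
    "act (eval_word (take k w)) (zs 0) = Some (zs k)" if "k \<le> n" for k
    using act_eval_word_take[OF order.trans[OF assms(3) V]] assms(5,6) run that by auto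
  moreover have "act (eval_word w) (xs 0) = Some (xs n)" "act (eval_word w) (zs 0) = Some (zs n)"
    using act_prefix[of n] assms(5) by simp_all
  moreover have "xs n = xs 0 \<longleftrightarrow> zs n = zs 0" using xs_zs[of n] xs_zs[of 0] by auto
  ultimately show ?thesis using xs_zs run short by (intro exI[of _ s] exI[of _ zs]) auto
qed

end
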